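(* Let $\delta_x,\delta_t>0$, let $T_x,T_t$ be the shift operators $T_xf(x,t)=f(x+\delta_x,t)$, $T_tf(x,t)=f(x,t+\delta_t)$, and let $\Delta_x=(T_x-1)/\delta_x$, $\Delta_t=(T_t-1)/\delta_t$. Consider the discrete heat equation $$\Delta_t\phi-(\Delta_x)^2\phi=0,$$ and the discrete Burgers equation for $u(x,t)$, $$\Delta_t u=\frac{1+\delta_x u}{1+\delta_t v}\,\Delta_x v,\qquad v=\Delta_x u+u\,T_xu,$$ which are related by the discrete Cole–Hopf transformation $\Delta_x\phi=u\phi$ (so that $\Delta_t\phi=v\phi$). Let $S$ be a linear operator (a finite combination of products of powers of $T_x^{\pm1},T_t^{\pm1}$ with coefficients depending on $x,t$) such that the flow $\phi_\lambda=S\phi$ is a symmetry (commuting flow) of the discrete heat equation. Then the same operator $S$ yields a symmetry of the discrete Burgers equation whose flow is $$u_\lambda=(1+\delta_x u)\,\Delta_x\!\Big(\frac{S\phi}{\phi}\Big),$$ where $S\phi/\phi$ can be expressed in terms of $u(x,t)$ and its shifted values alone.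
   Context: A symmetry (commuting flow) of a difference equation on the fixed lattice is an evolution $\partial w/\partial\lambda=Q$ in an auxiliary parameter $\lambda$ compatible with the equation, i.e. taking solutions to solutions; $\phi_\lambda$, $u_\lambda$ denote $\partial\phi/\partial\lambda$, $\partial u/\partial\lambda$. Here $\phi$ is assumed nonvanishing so that $u=\Delta_x\phi/\phi$ is defined. *)

theory Defs
  imports Complex_Main
begin

text \<open>Functions on the plane are curried: f x t. Shift operators
  T_x f x t = f (x + dx) t and T_t f x t = f x (t + dt).\<close>

definition Dx :: "real \<Rightarrow> (real \<Rightarrow> real \<Rightarrow> real) \<Rightarrow> real \<Rightarrow> real \<Rightarrow> real" where
  "Dx dx f x t = (f (x + dx) t - f x t) / dx"

definition Dt :: "real \<Rightarrow> (real \<Rightarrow> real \<Rightarrow> real) \<Rightarrow> real \<Rightarrow> real \<Rightarrow> real" where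
  "Dt dt f x t = (f x (t + dt) - f x t) / dt"

definition heat :: "real \<Rightarrow> real \<Rightarrow> (real \<Rightarrow> real \<Rightarrow> real) \<Rightarrow> real \<Rightarrow> real \<Rightarrow> real" where
  "heat dx dt \<phi> x t = Dt dt \<phi> x t - Dx dx (Dx dx \<phi>) x t"

definition burgers_v :: "real \<Rightarrow> (real \<Rightarrow> real \<Rightarrow> real) \<Rightarrow> real \<Rightarrow> real \<Rightarrow> real" where
  "burgers_v dx u x t = Dx dx u x t + u x t * u (x + dx) t"

definition burgers :: "real \<Rightarrow> real \<Rightarrow> (real \<Rightarrow> real \<Rightarrow> real) \<Rightarrow> real \<Rightarrow> real \<Rightarrow> real" where
  "burgers dx dt u x t =
     Dt dt u x t - (1 + dx * u x t) / (1 + dt * burgers_v dx u x t) * Dx dx (burgers_v dx u) x t"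

text \<open>Natural domain of the Burgers equation (denominators nonzero; these are
  exactly T_x phi / phi and T_t phi / phi under Cole--Hopf).\<close>
definition burgers_dom :: "real \<Rightarrow> real \<Rightarrow> (real \<Rightarrow> real \<Rightarrow> real) \<Rightarrow> bool" where
  "burgers_dom dx dt u \<longleftrightarrow>
     (\<forall>x t. 1 + dx * u x t \<noteq> 0 \<and> 1 + dt * burgers_v dx u x t \<noteq> 0)"

definition cole_hopf :: "real \<Rightarrow> (real \<Rightarrow> real \<Rightarrow> real) \<Rightarrow> real \<Rightarrow> real \<Rightarrow> real" where
  "cole_hopf dx \<phi> x t = Dx dx \<phi> x t / \<phi> x t"

definition lin_op :: "real \<Rightarrow> real \<Rightarrow> (int \<times> int) set \<Rightarrow> (int \<times> int \<Rightarrow> real \<Rightarrow> real \<Rightarrow> real)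
     \<Rightarrow> (real \<Rightarrow> real \<Rightarrow> real) \<Rightarrow> real \<Rightarrow> real \<Rightarrow> real" where
  "lin_op dx dt F c \<phi> x t =
     (\<Sum>(i, j)\<in>F. c (i, j) x t * \<phi> (x + of_int i * dx) (t + of_int j * dt))"

text \<open>Telescoping product g(s) g(s+h) ... g(s+(i-1)h) for i \<ge> 0 and
  1/(g(s-h) ... g(s-|i| h)) for i < 0: the ratio f(s+ih)/f(s) when f(s+h) = g(s) f(s).\<close>
definition path_ratio :: "(real \<Rightarrow> real) \<Rightarrow> real \<Rightarrow> real \<Rightarrow> int \<Rightarrow> real" where
  "path_ratio g h s i =
     (if 0 \<le> i then (\<Prod>k<nat i. g (s + real k * h))
      else (\<Prod>k\<in>{1..nat (- i)}. inverse (g (s - real k * h))))"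

text \<open>The expression of S phi / phi in terms of u and its shifts:
  T_x^i T_t^j phi / phi = (T_x^i phi / phi) * (T_t^j T_x^i phi / T_x^i phi),
  with T_x phi / phi = 1 + dx u and T_t phi / phi = 1 + dt v.\<close>
definition ratio_expr :: "real \<Rightarrow> real \<Rightarrow> (int \<times> int) set \<Rightarrow> (int \<times> int \<Rightarrow> real \<Rightarrow> real \<Rightarrow> real)
     \<Rightarrow> (real \<Rightarrow> real \<Rightarrow> real) \<Rightarrow> real \<Rightarrow> real \<Rightarrow> real" where
  "ratio_expr dx dt F c u x t =
     (\<Sum>(i, j)\<in>F. c (i, j) x t *
        (path_ratio (\<lambda>y. 1 + dx * u y t) dx x i *
         path_ratio (\<lambda>s. 1 + dt * burgers_v dx u (x + of_int i * dx) s) dt t j))"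

definition burgers_flow :: "real \<Rightarrow> real \<Rightarrow> (int \<times> int) set \<Rightarrow> (int \<times> int \<Rightarrow> real \<Rightarrow> real \<Rightarrow> real)
     \<Rightarrow> (real \<Rightarrow> real \<Rightarrow> real) \<Rightarrow> real \<Rightarrow> real \<Rightarrow> real" where
  "burgers_flow dx dt F c u x t = (1 + dx * u x t) * Dx dx (ratio_expr dx dt F c u) x t"

text \<open>Infinitesimal symmetry: the evolution w_lambda = Q[w] is compatible with the
  equation E[w] = 0 on the domain D: for every solution w in D, the linearisation
  of E at w in direction Q[w] vanishes at every lattice point.\<close>
definition is_symmetry ::
  "((real \<Rightarrow> real \<Rightarrow> real) \<Rightarrow> bool)
   \<Rightarrow> ((real \<Rightarrow> real \<Rightarrow> real) \<Rightarrow> real \<Rightarrow> real \<Rightarrow> real)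
   \<Rightarrow> ((real \<Rightarrow> real \<Rightarrow> real) \<Rightarrow> real \<Rightarrow> real \<Rightarrow> real) \<Rightarrow> bool" where
  "is_symmetry D E Q \<longleftrightarrow>
     (\<forall>w. D w \<and> (\<forall>x t. E w x t = 0) \<longrightarrow>
        (\<forall>x t. ((\<lambda>\<epsilon>. E (\<lambda>y s. w y s + \<epsilon> * Q w y s) x t) has_real_derivative 0) (at 0)))"

end

theory Submission
  imports Defs
begin

text \<open>Under the Cole--Hopf map the two multiplicative shift factors of \<open>\<phi>\<close> are
  \<open>T\<^sub>x\<phi>/\<phi> = 1 + \<delta>\<^sub>x u\<close> and \<open>T\<^sub>t\<phi>/\<phi> = 1 + \<delta>\<^sub>t v\<close>, so \<open>S\<phi>/\<phi>\<close> is a sum of telescoping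
  products of these factors, and the Burgers equation is exactly the zero-curvature
  condition of the two factors. Hence every Burgers solution in the domain is the
  Cole--Hopf image of a nonvanishing heat solution \<open>\<phi>\<close>, obtained by multiplying the factors
  along lattice paths. Since the heat equation is linear, \<open>\<phi> + \<epsilon> S\<phi>\<close> solves it for all \<open>\<epsilon>\<close>;
  near any lattice point its Cole--Hopf image therefore solves Burgers for small \<open>\<epsilon>\<close>, and its
  \<open>\<epsilon>\<close>-derivative at \<open>0\<close> is \<open>(1 + \<delta>\<^sub>x u) \<Delta>\<^sub>x(S\<phi>/\<phi>)\<close>. So the linearised Burgers operator
  annihilates this flow.\<close>

lemma path_ratio_nonpos:
  "i \<le> 0 \<Longrightarrow> path_ratio g h s i = (\<Prod>k\<in>{1..nat (- i)}. inverse (g (s - real k * h)))"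
  by (cases "i = 0") (simp_all add: path_ratio_def)

lemma path_ratio_succ:
  assumes "g (s + of_int i * h) \<noteq> 0"
  shows "path_ratio g h s (i + 1) = g (s + of_int i * h) * path_ratio g h s i"
proof (cases "0 \<le> i")
  case True
  then have "nat (i + 1) = Suc (nat i)" and "real (nat i) = of_int i" by simp_all
  with True show ?thesis by (simp add: path_ratio_def mult.commute)
next
  case False
  define m where "m = nat (- (i + 1))"
  have "nat (- i) = Suc m" and "s - real (Suc m) * h = s + of_int i * h"
    using False by (simp_all add: m_def algebra_simps)
  with assms False show ?thesis by (simp add: path_ratio_nonpos m_def)
qed

lemma path_ratio_nonzero: "(\<And>y. g y \<noteq> 0) \<Longrightarrow> path_ratio g h s i \<noteq> 0"
  by (simp add: path_ratio_def)

lemma path_ratio_mult: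
  "path_ratio (\<lambda>y. f y * g y) h s i = path_ratio f h s i * path_ratio g h s i"
  by (simp add: path_ratio_def prod.distrib)

lemma path_ratio_telescope:
  assumes nz: "\<And>y. f y \<noteq> 0" and g: "\<And>y. g y = f (y + h) / f y"
  shows "path_ratio g h s i = f (s + of_int i * h) / f s"
proof (induction i rule: int_induct[where k = 0])
  case base
  show ?case using nz by (simp add: path_ratio_def)
next
  case (step1 i)
  have "path_ratio g h s (i + 1) = g (s + of_int i * h) * path_ratio g h s i"
    by (rule path_ratio_succ) (simp add: g nz)
  also have "\<dots> = f (s + of_int (i + 1) * h) / f s"
    unfolding step1(2) using nz by (simp add: g algebra_simps)
  finally show ?case .
next
  case (step2 i)
  have g_nz: "g (s + of_int (i - 1) * h) \<noteq> 0"
    by (simp add: g nz)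
  have "path_ratio g h s (i - 1 + 1) = g (s + of_int (i - 1) * h) * path_ratio g h s (i - 1)"
    by (rule path_ratio_succ) (fact g_nz)
  then have "path_ratio g h s (i - 1) = path_ratio g h s i / g (s + of_int (i - 1) * h)"
    using g_nz by (simp add: field_simps)
  also have "\<dots> = f (s + of_int (i - 1) * h) / f s"
    unfolding step2(2) using nz by (simp add: g algebra_simps)
  finally show ?case .
qed

lemma floor_divide_add_self: "h \<noteq> 0 \<Longrightarrow> \<lfloor>(a + h) / h\<rfloor> = \<lfloor>a / h\<rfloor> + 1"
  for a h :: real
  by (simp add: add_divide_distrib)

lemma discrete_potential_exists:
  fixes g k :: "real \<Rightarrow> real \<Rightarrow> real"
  assumes "dx \<noteq> 0" "dt \<noteq> 0" and g_nz: "\<And>y s. g y s \<noteq> 0" and k_nz: "\<And>y s. k y s \<noteq> 0"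
    and flat: "\<And>y s. g y (s + dt) * k y s = k (y + dx) s * g y s"
  obtains \<phi> where "\<And>y s. \<phi> y s \<noteq> 0" and "\<And>y s. \<phi> (y + dx) s = g y s * \<phi> y s"
    and "\<And>y s. \<phi> y (s + dt) = k y s * \<phi> y s"
proof -
  have transport: "path_ratio (k (y + dx)) dt s n
      = g y (s + of_int n * dt) / g y s * path_ratio (k y) dt s n" for y s n
  proof -
    have "k (y + dx) = (\<lambda>s. g y (s + dt) / g y s * k y s)"
      using flat g_nz by (auto simp: field_simps)
    then have "path_ratio (k (y + dx)) dt s n
        = path_ratio (\<lambda>s. g y (s + dt) / g y s) dt s n * path_ratio (k y) dt s n"
      by (simp only: path_ratio_mult)
    also have "path_ratio (\<lambda>s. g y (s + dt) / g y s) dt s n = g y (s + of_int n * dt) / g y s"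
      by (rule path_ratio_telescope) (simp_all add: g_nz)
    finally show ?thesis .
  qed
  define base :: "real \<Rightarrow> real \<Rightarrow> real" where "base a h = a - of_int \<lfloor>a / h\<rfloor> * h" for a h
  have base_shift: "base (a + h) h = base a h" if "h \<noteq> 0" for a h
    using that by (simp add: base_def floor_divide_add_self algebra_simps)
  have base_floor: "base a h + of_int \<lfloor>a / h\<rfloor> * h = a" for a h
    by (simp add: base_def)
  txt \<open>Multiply the \<open>g\<close>-factors from the base point of \<open>y\<close> to \<open>y\<close> at the base time of \<open>s\<close>,
    then the \<open>k\<close>-factors up to \<open>s\<close>; \<open>transport\<close> makes the result independent of the order.\<close>
  define \<phi> where "\<phi> y s = path_ratio (\<lambda>y'. g y' (base s dt)) dx (base y dx) \<lfloor>y / dx\<rfloor>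
      * path_ratio (k y) dt (base s dt) \<lfloor>s / dt\<rfloor>" for y s
  show ?thesis
  proof
    show "\<phi> y s \<noteq> 0" for y s
      by (simp add: \<phi>_def path_ratio_nonzero g_nz k_nz)
    show "\<phi> (y + dx) s = g y s * \<phi> y s" for y s
      using \<open>dx \<noteq> 0\<close> g_nz[of y "base s dt"]
      by (simp add: \<phi>_def base_shift floor_divide_add_self path_ratio_succ g_nz base_floor
          transport)
    show "\<phi> y (s + dt) = k y s * \<phi> y s" for y s
      using \<open>dt \<noteq> 0\<close>
      by (simp add: \<phi>_def base_shift floor_divide_add_self path_ratio_succ k_nz base_floor)
  qed
qed

lemma heat_add_scaled:
  "heat dx dt (\<lambda>y s. \<phi> y s + e * \<psi> y s) x t = heat dx dt \<phi> x t + e * heat dx dt \<psi> x t"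
  by (simp add: heat_def Dt_def Dx_def diff_divide_distrib add_divide_distrib algebra_simps)

lemma heat_symmetry_maps_solutions:
  assumes "is_symmetry (\<lambda>_. True) (heat dx dt) S" and "\<And>x t. heat dx dt \<phi> x t = 0"
  shows "heat dx dt (S \<phi>) x t = 0"
proof -
  have "((\<lambda>\<epsilon>. heat dx dt (\<lambda>y s. \<phi> y s + \<epsilon> * S \<phi> y s) x t) has_real_derivative 0) (at 0)"
    using assms unfolding is_symmetry_def by blast
  moreover have "((\<lambda>\<epsilon>. heat dx dt (\<lambda>y s. \<phi> y s + \<epsilon> * S \<phi> y s) x t)
      has_real_derivative heat dx dt (S \<phi>) x t) (at 0)"
    unfolding heat_add_scaled by (rule derivative_eq_intros refl)+ simp
  ultimately have "0 = heat dx dt (S \<phi>) x t"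
    by (rule DERIV_unique)
  then show ?thesis ..
qed

lemma heat_step:
  "dt \<noteq> 0 \<Longrightarrow> heat dx dt \<phi> x t = 0 \<Longrightarrow>
    \<phi> x (t + dt) = \<phi> x t + dt * Dx dx (Dx dx \<phi>) x t"
  by (simp add: heat_def Dt_def field_simps)

lemma cole_hopf_shift_x:
  "dx \<noteq> 0 \<Longrightarrow> \<phi> y s \<noteq> 0 \<Longrightarrow> 1 + dx * cole_hopf dx \<phi> y s = \<phi> (y + dx) s / \<phi> y s"
  by (simp add: cole_hopf_def Dx_def field_simps)

lemma cole_hopf_shift_t:
  assumes "dx \<noteq> 0" "dt \<noteq> 0" "heat dx dt \<phi> y s = 0" "\<phi> y s \<noteq> 0" "\<phi> (y + dx) s \<noteq> 0"
  shows "1 + dt * burgers_v dx (cole_hopf dx \<phi>) y s = \<phi> y (s + dt) / \<phi> y s"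
  unfolding heat_step[OF assms(2,3)] using assms(1,4,5)
  by (simp add: burgers_v_def cole_hopf_def Dx_def field_simps)

lemma cole_hopf_eqI:
  "dx \<noteq> 0 \<Longrightarrow> (\<And>y s. \<phi> (y + dx) s = (1 + dx * u y s) * \<phi> y s) \<Longrightarrow> (\<And>y s. \<phi> y s \<noteq> 0)
    \<Longrightarrow> cole_hopf dx \<phi> = u"
  by (intro ext) (simp add: cole_hopf_def Dx_def field_simps)

lemma heat_of_cole_hopf_potential:
  assumes "dx \<noteq> 0" "dt \<noteq> 0"
    and "\<And>y s. \<phi> (y + dx) s = (1 + dx * u y s) * \<phi> y s"
    and "\<And>y s. \<phi> y (s + dt) = (1 + dt * burgers_v dx u y s) * \<phi> y s"
  shows "heat dx dt \<phi> x t = 0"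
  using assms(1,2)
  unfolding heat_def Dt_def assms(4) Dx_def burgers_v_def assms(3) by (simp add: field_simps)

lemma burgers_iff_zero_curvature:
  assumes "dx \<noteq> 0" "dt \<noteq> 0" "1 + dt * burgers_v dx u x t \<noteq> 0"
  shows "burgers dx dt u x t = 0 \<longleftrightarrow>
    (1 + dx * u x (t + dt)) * (1 + dt * burgers_v dx u x t)
      = (1 + dt * burgers_v dx u (x + dx) t) * (1 + dx * u x t)"
proof -
  define a b c d where "a = u x t" and "b = u x (t + dt)"
    and "c = burgers_v dx u x t" and "d = burgers_v dx u (x + dx) t"
  have "burgers dx dt u x t = (b - a) / dt - (1 + dx * a) / (1 + dt * c) * ((d - c) / dx)"
    by (simp add: a_def b_def c_def d_def burgers_def Dt_def Dx_def)
  moreover have "1 + dt * c \<noteq> 0"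
    using assms(3) by (simp add: c_def)
  ultimately have "dx * dt * (1 + dt * c) * burgers dx dt u x t
      = (1 + dx * b) * (1 + dt * c) - (1 + dt * d) * (1 + dx * a)"
    using assms(1,2) by (simp add: right_diff_distrib) (simp add: field_simps)
  then show ?thesis
    using assms by (auto simp: a_def b_def c_def d_def)
qed

lemma burgers_cole_hopf:
  assumes "dx \<noteq> 0" "dt \<noteq> 0"
    and "heat dx dt \<phi> x t = 0" "heat dx dt \<phi> (x + dx) t = 0"
    and "\<phi> x t \<noteq> 0" "\<phi> (x + dx) t \<noteq> 0" "\<phi> (x + dx + dx) t \<noteq> 0" "\<phi> x (t + dt) \<noteq> 0"
  shows "burgers dx dt (cole_hopf dx \<phi>) x t = 0"
proof -
  have v0: "1 + dt * burgers_v dx (cole_hopf dx \<phi>) x t = \<phi> x (t + dt) / \<phi> x t"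
    and v1: "1 + dt * burgers_v dx (cole_hopf dx \<phi>) (x + dx) t = \<phi> (x + dx) (t + dt) / \<phi> (x + dx) t"
    using assms by (simp_all add: cole_hopf_shift_t)
  have u0: "1 + dx * cole_hopf dx \<phi> x t = \<phi> (x + dx) t / \<phi> x t"
    and u1: "1 + dx * cole_hopf dx \<phi> x (t + dt) = \<phi> (x + dx) (t + dt) / \<phi> x (t + dt)"
    using assms by (simp_all add: cole_hopf_shift_x)
  show ?thesis
    using assms by (simp add: burgers_iff_zero_curvature v0 v1 u0 u1)
qed

lemma burgers_solution_is_cole_hopf:
  assumes "dx \<noteq> 0" "dt \<noteq> 0" and "burgers_dom dx dt u" and "\<And>x t. burgers dx dt u x t = 0"
  obtains \<phi> where "\<And>x t. \<phi> x t \<noteq> 0" and "\<And>x t. heat dx dt \<phi> x t = 0" and "cole_hopf dx \<phi> = u"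
proof -
  have nz: "1 + dx * u y s \<noteq> 0" "1 + dt * burgers_v dx u y s \<noteq> 0" for y s
    using \<open>burgers_dom dx dt u\<close> by (auto simp: burgers_dom_def)
  with assms have "(1 + dx * u y (s + dt)) * (1 + dt * burgers_v dx u y s)
      = (1 + dt * burgers_v dx u (y + dx) s) * (1 + dx * u y s)" for y s
    by (simp add: burgers_iff_zero_curvature[symmetric])
  with assms(1,2) nz obtain \<phi> where \<phi>_nz: "\<And>y s. \<phi> y s \<noteq> 0"
    and shift_x: "\<And>y s. \<phi> (y + dx) s = (1 + dx * u y s) * \<phi> y s"
    and shift_t: "\<And>y s. \<phi> y (s + dt) = (1 + dt * burgers_v dx u y s) * \<phi> y s"
    by (rule discrete_potential_exists[where g = "\<lambda>y s. 1 + dx * u y s"]) blast+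
  show ?thesis
  proof (rule that)
    show "heat dx dt \<phi> x t = 0" for x t
      using assms(1,2) shift_x shift_t by (rule heat_of_cole_hopf_potential)
    show "cole_hopf dx \<phi> = u"
      using assms(1) shift_x \<phi>_nz by (rule cole_hopf_eqI)
  qed (fact \<phi>_nz)
qed

lemma lin_op_div_eq_ratio_expr:
  assumes "dx \<noteq> 0" "dt \<noteq> 0" and "\<And>x t. heat dx dt \<phi> x t = 0" and nz: "\<And>x t. \<phi> x t \<noteq> 0"
  shows "lin_op dx dt F c \<phi> x t / \<phi> x t = ratio_expr dx dt F c (cole_hopf dx \<phi>) x t"
proof -
  have ratio_x: "path_ratio (\<lambda>y. 1 + dx * cole_hopf dx \<phi> y t) dx x i
      = \<phi> (x + of_int i * dx) t / \<phi> x t" for i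
    by (rule path_ratio_telescope) (simp_all add: assms cole_hopf_shift_x)
  have ratio_t: "path_ratio (\<lambda>s. 1 + dt * burgers_v dx (cole_hopf dx \<phi>) y s) dt t j
      = \<phi> y (t + of_int j * dt) / \<phi> y t" for y j
    by (rule path_ratio_telescope) (simp_all add: assms cole_hopf_shift_t)
  have "lin_op dx dt F c \<phi> x t / \<phi> x t
      = (\<Sum>(i, j)\<in>F. c (i, j) x t * \<phi> (x + of_int i * dx) (t + of_int j * dt) / \<phi> x t)"
    by (simp add: lin_op_def sum_divide_distrib case_prod_beta)
  also have "\<dots> = ratio_expr dx dt F c (cole_hopf dx \<phi>) x t"
    unfolding ratio_expr_def ratio_x ratio_t by (rule sum.cong) (auto simp: nz)
  finally show ?thesis .
qed

definition burgers_v_lin :: "real \<Rightarrow> (real \<Rightarrow> real \<Rightarrow> real) \<Rightarrow> (real \<Rightarrow> real \<Rightarrow> real) \<Rightarrow> real \<Rightarrow> real \<Rightarrow> real" where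
  "burgers_v_lin dx u q x t = Dx dx q x t + q x t * u (x + dx) t + u x t * q (x + dx) t"

definition burgers_lin :: "real \<Rightarrow> real \<Rightarrow> (real \<Rightarrow> real \<Rightarrow> real) \<Rightarrow> (real \<Rightarrow> real \<Rightarrow> real) \<Rightarrow> real \<Rightarrow> real \<Rightarrow> real" where
  "burgers_lin dx dt u q x t =
     Dt dt q x t
     - ((dx * q x t * (1 + dt * burgers_v dx u x t) - (1 + dx * u x t) * (dt * burgers_v_lin dx u q x t))
         / (1 + dt * burgers_v dx u x t)\<^sup>2 * Dx dx (burgers_v dx u) x t
       + (1 + dx * u x t) / (1 + dt * burgers_v dx u x t) * Dx dx (burgers_v_lin dx u q) x t)"

lemma has_real_derivative_burgers_v:
  assumes "\<And>y s. ((\<lambda>\<epsilon>. w \<epsilon> y s) has_real_derivative q y s) (at e)"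
  shows "((\<lambda>\<epsilon>. burgers_v dx (w \<epsilon>) x t) has_real_derivative burgers_v_lin dx (w e) q x t) (at e)"
  unfolding burgers_v_def burgers_v_lin_def Dx_def
  by (rule DERIV_cdivide derivative_eq_intros assms refl)+ (simp add: diff_divide_distrib)

lemma has_real_derivative_burgers:
  assumes "\<And>y s. ((\<lambda>\<epsilon>. w \<epsilon> y s) has_real_derivative q y s) (at e)"
    and "1 + dt * burgers_v dx (w e) x t \<noteq> 0"
  shows "((\<lambda>\<epsilon>. burgers dx dt (w \<epsilon>) x t) has_real_derivative burgers_lin dx dt (w e) q x t) (at e)"
  unfolding burgers_def burgers_lin_def Dt_def Dx_def[of dx "burgers_v dx _"] Dx_def[of dx "burgers_v_lin dx _ _"]
  by (rule DERIV_cdivide derivative_eq_intros assms has_real_derivative_burgers_v refl)+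
    (simp add: power2_eq_square mult_ac)

corollary has_real_derivative_burgers_line:
  assumes "1 + dt * burgers_v dx u x t \<noteq> 0"
  shows "((\<lambda>\<epsilon>. burgers dx dt (\<lambda>y s. u y s + \<epsilon> * q y s) x t)
      has_real_derivative burgers_lin dx dt u q x t) (at 0)"
proof -
  have "((\<lambda>\<epsilon>. u y s + \<epsilon> * q y s) has_real_derivative q y s) (at 0)" for y s
    by (rule derivative_eq_intros refl)+ simp
  moreover have "1 + dt * burgers_v dx (\<lambda>y s. u y s + 0 * q y s) x t \<noteq> 0"
    using assms by simp
  ultimately have "((\<lambda>\<epsilon>. burgers dx dt (\<lambda>y s. u y s + \<epsilon> * q y s) x t)
      has_real_derivative burgers_lin dx dt (\<lambda>y s. u y s + 0 * q y s) q x t) (at 0)"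
    by (rule has_real_derivative_burgers)
  then show ?thesis
    by simp
qed

lemma has_real_derivative_cole_hopf:
  assumes "dx \<noteq> 0" "\<phi> y s \<noteq> 0" "\<phi> (y + dx) s \<noteq> 0"
  shows "((\<lambda>\<epsilon>. cole_hopf dx (\<lambda>y s. \<phi> y s + \<epsilon> * \<psi> y s) y s) has_real_derivative
      (1 + dx * cole_hopf dx \<phi> y s) * Dx dx (\<lambda>y s. \<psi> y s / \<phi> y s) y s) (at 0)"
  unfolding cole_hopf_def Dx_def
  by (rule DERIV_cdivide derivative_eq_intros refl)+ (use assms in \<open>simp_all add: field_simps\<close>)

lemma burgers_lin_cole_hopf_heat_flow:
  assumes "dx \<noteq> 0" "dt \<noteq> 0"
    and heat: "\<And>y s. heat dx dt \<phi> y s = 0" "\<And>y s. heat dx dt \<psi> y s = 0"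
    and nz: "\<And>y s. \<phi> y s \<noteq> 0"
  shows "burgers_lin dx dt (cole_hopf dx \<phi>)
      (\<lambda>y s. (1 + dx * cole_hopf dx \<phi> y s) * Dx dx (\<lambda>y s. \<psi> y s / \<phi> y s) y s) x t = 0"
proof -
  define W where "W \<epsilon> = cole_hopf dx (\<lambda>y s. \<phi> y s + \<epsilon> * \<psi> y s)" for \<epsilon>
  have W0: "W 0 = cole_hopf dx \<phi>"
    by (simp add: W_def)
  have "1 + dt * burgers_v dx (W 0) x t \<noteq> 0"
    using assms by (simp add: W0 cole_hopf_shift_t)
  with assms(1) nz have "((\<lambda>\<epsilon>. burgers dx dt (W \<epsilon>) x t) has_real_derivative
      burgers_lin dx dt (W 0) (\<lambda>y s. (1 + dx * cole_hopf dx \<phi> y s) * Dx dx (\<lambda>y s. \<psi> y s / \<phi> y s) y s) x t)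
      (at 0)"
    by (intro has_real_derivative_burgers) (simp_all add: W_def has_real_derivative_cole_hopf)
  moreover have "((\<lambda>\<epsilon>. burgers dx dt (W \<epsilon>) x t) has_real_derivative 0) (at 0)"
  proof -
    have near_nz: "\<forall>\<^sub>F \<epsilon> in nhds 0. \<phi> y s + \<epsilon> * \<psi> y s \<noteq> 0" for y s
      by (rule tendsto_imp_eventually_ne) (rule tendsto_eq_intros filterlim_ident refl | simp add: nz)+
    txt \<open>Burgers at \<open>(x, t)\<close> only sees \<open>\<phi> + \<epsilon> \<psi>\<close> at these four points.\<close>
    have "\<forall>\<^sub>F \<epsilon> in nhds 0. burgers dx dt (W \<epsilon>) x t = 0"
      using near_nz[of x t] near_nz[of "x + dx" t] near_nz[of "x + dx + dx" t] near_nz[of x "t + dt"]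
    proof eventually_elim
      case (elim \<epsilon>)
      then show ?case
        unfolding W_def using assms(1,2) heat by (intro burgers_cole_hopf) (simp_all add: heat_add_scaled)
    qed
    then have "((\<lambda>\<epsilon>. burgers dx dt (W \<epsilon>) x t) has_real_derivative 0) (at 0)
        \<longleftrightarrow> ((\<lambda>_. 0) has_real_derivative 0) (at 0)"
      by (intro DERIV_cong_ev) simp_all
    then show ?thesis
      by simp
  qed
  ultimately show ?thesis
    unfolding W0 by (rule DERIV_unique)
qed

theorem theorem5p4:
  fixes dx dt :: real and F :: "(int \<times> int) set" and c :: "int \<times> int \<Rightarrow> real \<Rightarrow> real \<Rightarrow> real"
  assumes "dx > 0" and "dt > 0" and "finite F"
    and "is_symmetry (\<lambda>_. True) (heat dx dt) (lin_op dx dt F c)"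
  shows "(\<forall>\<phi>. (\<forall>x t. heat dx dt \<phi> x t = 0) \<and> (\<forall>x t. \<phi> x t \<noteq> 0) \<longrightarrow>
            (\<forall>x t. lin_op dx dt F c \<phi> x t / \<phi> x t = ratio_expr dx dt F c (cole_hopf dx \<phi>) x t))
       \<and> is_symmetry (burgers_dom dx dt) (burgers dx dt) (burgers_flow dx dt F c)"
proof
  have nz: "dx \<noteq> 0" "dt \<noteq> 0"
    using assms by auto
  then show "\<forall>\<phi>. (\<forall>x t. heat dx dt \<phi> x t = 0) \<and> (\<forall>x t. \<phi> x t \<noteq> 0) \<longrightarrow>
      (\<forall>x t. lin_op dx dt F c \<phi> x t / \<phi> x t = ratio_expr dx dt F c (cole_hopf dx \<phi>) x t)"
    by (blast intro: lin_op_div_eq_ratio_expr)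
  show "is_symmetry (burgers_dom dx dt) (burgers dx dt) (burgers_flow dx dt F c)"
    unfolding is_symmetry_def
  proof (intro allI impI)
    fix w x t
    assume sol: "burgers_dom dx dt w \<and> (\<forall>x t. burgers dx dt w x t = 0)"
    then obtain \<phi> where \<phi>_nz: "\<And>x t. \<phi> x t \<noteq> 0" and heat: "\<And>x t. heat dx dt \<phi> x t = 0"
      and w: "cole_hopf dx \<phi> = w"
      using burgers_solution_is_cole_hopf[OF nz] by blast
    let ?\<psi> = "lin_op dx dt F c \<phi>" and ?Q = "burgers_flow dx dt F c w"
    have heat_\<psi>: "heat dx dt ?\<psi> x t = 0" for x t
      using assms(4) heat by (rule heat_symmetry_maps_solutions)
    have "?Q = (\<lambda>y s. (1 + dx * w y s) * Dx dx (\<lambda>y s. ?\<psi> y s / \<phi> y s) y s)"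
      using lin_op_div_eq_ratio_expr[OF nz heat \<phi>_nz] by (simp add: burgers_flow_def w fun_eq_iff)
    then have "burgers_lin dx dt w ?Q x t = 0"
      using burgers_lin_cole_hopf_heat_flow[OF nz heat heat_\<psi> \<phi>_nz] by (simp add: w)
    moreover have "((\<lambda>\<epsilon>. burgers dx dt (\<lambda>y s. w y s + \<epsilon> * ?Q y s) x t)
        has_real_derivative burgers_lin dx dt w ?Q x t) (at 0)"
      using sol by (intro has_real_derivative_burgers_line) (simp add: burgers_dom_def)
    ultimately show "((\<lambda>\<epsilon>. burgers dx dt (\<lambda>y s. w y s + \<epsilon> * burgers_flow dx dt F c w y s) x t)
        has_real_derivative 0) (at 0)"
      by simp
  qed
qed

end
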